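(* Let $n\ge1$, let $L_1,\dots,L_N$ be complex $n\times n$ matrices, let $\pi_1,\dots,\pi_n$ be mutually orthogonal rank-one orthogonal projectors on $\mathbb{C}^n$, let $w_{jk}:=\sum_{\alpha=1}^N \mathrm{Tr}(\pi_j L_\alpha\pi_k L_\alpha^\dagger)$ for $j\neq k$, and let $\Omega$ be the matrix with $\Omega_{jk}=w_{jk}$ ($j\ne k$) and $\Omega_{kk}=-\sum_{l\ne k}w_{lk}$. Let $N_1,\dots,N_{n_B}$ be the vertex sets of the basins of $G_\Omega$ and $N_B=\bigcup_\eta N_\eta$. Then the kernel of $\Omega^T$ is spanned by the linearly independent vectors $$\kappa_\eta := \Big(\sum_{\tau\in T_B(G_\Omega)} W(\tau)\Big)\sum_{j\in N_\eta} e_j + \sum_{l\notin N_B}\ \sum_{\tau\in T_B(G_\Omega,\eta,l)} W(\tau)\, e_l,\qquad \eta=1,\dots,n_B.$$ Moreover, if $\Omega$ is time-independent and $\Lambda(t)\in\mathbb{R}^n$ solves $\frac{d}{dt}\Lambda=\Omega\Lambda$, then each quantity $\kappa_\eta^T\Lambda(t)$ is constant in $t$.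
   Context: $G_\Omega$ is the directed graph on $\{1,\dots,n\}$ with a directed edge from $k$ to $j$ of weight $w_{jk}$ for each $j\ne k$ with $w_{jk}\ne0$. A basin is a strongly connected component with no edge leaving it. $e_j$ is the $j$-th standard basis vector. $T_B(G_\Omega)$ is the set of spanning forests of $G_\Omega$ whose set of roots is exactly $N_B$: subgraphs containing all $n$ vertices, with no directed cycles, in which every vertex of $N_B$ has no outgoing edge and every vertex outside $N_B$ has exactly one outgoing edge (so each vertex has a directed path to a unique root in $N_B$). $T_B(G_\Omega,\eta,l)$ is the set of forests in $T_B(G_\Omega)$ in which vertex $l$ lies in a tree whose root is in $N_\eta$. For a forest $\tau$, $W(\tau)$ is the product of its edge weights, with $W(\tau)=1$ if $\tau$ has no edges. *)

theory Defs
  imports "HOL-Analysis.Analysis"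
begin

text \<open>Vertices of the graph are the elements of a finite type 'n (so n = CARD('n) \<ge> 1).\<close>

definition ctrans :: "complex^'n^'m \<Rightarrow> complex^'m^'n" where
  "ctrans A = (\<chi> i j. cnj (A $ j $ i))"

definition rank_one_orth_proj :: "complex^'n^'n \<Rightarrow> bool" where
  "rank_one_orth_proj P \<longleftrightarrow> P ** P = P \<and> ctrans P = P \<and>
     (\<exists>u. u \<noteq> 0 \<and> range (\<lambda>x. P *v x) = {c *s u | c. True})"

text \<open>The rate w_jk = sum_alpha Tr(pi_j L_alpha pi_k L_alpha^dagger) (real part; it is real).\<close>
definition rate :: "nat \<Rightarrow> (nat \<Rightarrow> complex^'n^'n) \<Rightarrow> ('n \<Rightarrow> complex^'n^'n) \<Rightarrow> 'n \<Rightarrow> 'n \<Rightarrow> real" where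
  "rate N L \<pi> j k = Re (\<Sum>\<alpha>\<in>{1..N}. trace (\<pi> j ** L \<alpha> ** \<pi> k ** ctrans (L \<alpha>)))"

definition Omega_mat :: "nat \<Rightarrow> (nat \<Rightarrow> complex^'n^'n) \<Rightarrow> ('n \<Rightarrow> complex^'n^'n) \<Rightarrow> real^'n^'n" where
  "Omega_mat N L \<pi> = (\<chi> j k. if j \<noteq> k then rate N L \<pi> j k
                               else - (\<Sum>l\<in>UNIV - {k}. rate N L \<pi> l k))"

definition gedge :: "real^'n^'n \<Rightarrow> 'n \<Rightarrow> 'n \<Rightarrow> bool" where
  "gedge \<Omega> k j \<longleftrightarrow> j \<noteq> k \<and> \<Omega> $ j $ k \<noteq> 0"

definition gedges :: "real^'n^'n \<Rightarrow> ('n \<times> 'n) set" where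
  "gedges \<Omega> = {(k, j). gedge \<Omega> k j}"

definition scc :: "real^'n^'n \<Rightarrow> 'n \<Rightarrow> 'n set" where
  "scc \<Omega> k = {j. (k, j) \<in> (gedges \<Omega>)\<^sup>* \<and> (j, k) \<in> (gedges \<Omega>)\<^sup>*}"

definition basins :: "real^'n^'n \<Rightarrow> 'n set set" where
  "basins \<Omega> = {C. \<exists>k. C = scc \<Omega> k \<and> (\<forall>a\<in>C. \<forall>b. gedge \<Omega> a b \<longrightarrow> b \<in> C)}"

definition basin_union :: "real^'n^'n \<Rightarrow> 'n set" where
  "basin_union \<Omega> = \<Union> (basins \<Omega>)"

text \<open>Spanning forests (as sets of directed edges (source, target)) whose root set is exactly R.\<close>
definition spanning_forest :: "real^'n^'n \<Rightarrow> 'n set \<Rightarrow> ('n \<times> 'n) set \<Rightarrow> bool" where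
  "spanning_forest \<Omega> R F \<longleftrightarrow>
     F \<subseteq> gedges \<Omega> \<and>
     (\<forall>r\<in>R. \<forall>j. (r, j) \<notin> F) \<and>
     (\<forall>k. k \<notin> R \<longrightarrow> (\<exists>!j. (k, j) \<in> F)) \<and>
     acyclic F"

definition forests_B :: "real^'n^'n \<Rightarrow> ('n \<times> 'n) set set" where
  "forests_B \<Omega> = {F. spanning_forest \<Omega> (basin_union \<Omega>) F}"

definition forests_B_to :: "real^'n^'n \<Rightarrow> 'n set \<Rightarrow> 'n \<Rightarrow> ('n \<times> 'n) set set" where
  "forests_B_to \<Omega> C l = {F \<in> forests_B \<Omega>. \<exists>r\<in>C. (l, r) \<in> F\<^sup>*}"

definition fweight :: "real^'n^'n \<Rightarrow> ('n \<times> 'n) set \<Rightarrow> real" where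
  "fweight \<Omega> F = (\<Prod>(k, j)\<in>F. \<Omega> $ j $ k)"

definition kappa :: "real^'n^'n \<Rightarrow> 'n set \<Rightarrow> real^'n" where
  "kappa \<Omega> C =
     (\<Sum>\<tau>\<in>forests_B \<Omega>. fweight \<Omega> \<tau>) *\<^sub>R (\<Sum>j\<in>C. axis j 1)
     + (\<Sum>l\<in>UNIV - basin_union \<Omega>. (\<Sum>\<tau>\<in>forests_B_to \<Omega> C l. fweight \<Omega> \<tau>) *\<^sub>R axis l 1)"

end

theory Submission
  imports Defs
begin

(* Omega is a rate matrix: its off-diagonal entries w_jk are sums of the squared Frobenius
   norms of the matrices pi_j L_alpha pi_k, hence nonnegative, and its columns sum to zero.
   The l-th entry of kappa_eta is the total weight of the forests in T_B in which the tree of l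
   is rooted in N_eta.

   That Omega^T kappa_eta = 0 is the Markov chain tree theorem. At a vertex of a basin all
   out-neighbours lie in the same basin. At a vertex k outside N_B, redirecting the out-edge of
   k in a forest to another out-neighbour j not upstream of k is an involution on pairs
   (forest, j) that exchanges the inflow and the outflow terms of k one by one.

   Conversely, a left null vector x is harmonic: x_k is a weighted average of x over the
   out-neighbours of k. By the maximum principle x is constant on each basin, and x = 0 if x
   vanishes on N_B. On N_B, kappa_eta is Z times the indicator of N_eta, where
   Z = sum of W(tau) over T_B is positive, so the kappa_eta form a basis of the kernel.
   Finally d/dt (kappa . Lambda) = (Omega^T kappa) . Lambda = 0. *)

section \<open>Basins of the graph of a matrix\<close>

context
  fixes \<Omega> :: "real^'n^'n"
begin

lemma gedges_iff: "(k, j) \<in> gedges \<Omega> \<longleftrightarrow> j \<noteq> k \<and> \<Omega> $ j $ k \<noteq> 0"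
  by (simp add: gedges_def gedge_def)

lemma scc_self: "k \<in> scc \<Omega> k"
  by (simp add: scc_def)

lemma scc_eqI: "j \<in> scc \<Omega> k \<Longrightarrow> scc \<Omega> j = scc \<Omega> k"
  unfolding scc_def by (auto intro: rtrancl_trans)

lemma basin_eq_scc: "C \<in> basins \<Omega> \<Longrightarrow> v \<in> C \<Longrightarrow> C = scc \<Omega> v"
  unfolding basins_def using scc_eqI by blast

lemma basins_disjoint: "C \<in> basins \<Omega> \<Longrightarrow> C' \<in> basins \<Omega> \<Longrightarrow> v \<in> C \<Longrightarrow> v \<in> C' \<Longrightarrow> C = C'"
  by (metis basin_eq_scc)

lemma basin_nonempty: "C \<in> basins \<Omega> \<Longrightarrow> C \<noteq> {}"
  unfolding basins_def using scc_self by blast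

lemma basin_subset_basin_union: "C \<in> basins \<Omega> \<Longrightarrow> C \<subseteq> basin_union \<Omega>"
  unfolding basin_union_def by blast

lemma basin_rtrancl_closed:
  assumes "C \<in> basins \<Omega>" "a \<in> C" "(a, b) \<in> (gedges \<Omega>)\<^sup>*"
  shows "b \<in> C"
  using assms(3) by induction (use assms(1,2) in \<open>auto simp: basins_def gedges_def\<close>)

lemma basin_union_edge_closed:
  assumes "k \<in> basin_union \<Omega>" "(k, j) \<in> gedges \<Omega>"
  shows "j \<in> basin_union \<Omega>"
  using assms basin_rtrancl_closed unfolding basin_union_def by blast

lemma basin_union_edge_iff:
  assumes C: "C \<in> basins \<Omega>" and k: "k \<in> basin_union \<Omega>" and kj: "(k, j) \<in> gedges \<Omega>"
  shows "j \<in> C \<longleftrightarrow> k \<in> C"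
proof -
  obtain C' where C': "C' \<in> basins \<Omega>" "k \<in> C'"
    using k unfolding basin_union_def by blast
  then have "j \<in> C'"
    using kj basin_rtrancl_closed by blast
  then show ?thesis
    using C C' kj basins_disjoint basin_rtrancl_closed by blast
qed

lemma scc_in_basins:
  assumes "\<And>y. (m, y) \<in> (gedges \<Omega>)\<^sup>* \<Longrightarrow> (y, m) \<in> (gedges \<Omega>)\<^sup>*"
  shows "scc \<Omega> m \<in> basins \<Omega>"
  unfolding basins_def
proof (intro CollectI exI conjI ballI allI impI)
  fix a b assume "a \<in> scc \<Omega> m" "gedge \<Omega> a b"
  then have "(m, b) \<in> (gedges \<Omega>)\<^sup>*"
    unfolding scc_def gedges_def by (auto intro: rtrancl_into_rtrancl)
  then show "b \<in> scc \<Omega> m"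
    using assms unfolding scc_def by auto
qed simp

text \<open>A vertex reachable from k with the fewest reachable vertices lies in a basin.\<close>
lemma ex_basin_union_reachable: "\<exists>b\<in>basin_union \<Omega>. (k, b) \<in> (gedges \<Omega>)\<^sup>*"
proof -
  define R where "R v = {j. (v, j) \<in> (gedges \<Omega>)\<^sup>*}" for v
  obtain m where km: "(k, m) \<in> (gedges \<Omega>)\<^sup>*"
    and min: "\<And>y. (k, y) \<in> (gedges \<Omega>)\<^sup>* \<Longrightarrow> card (R m) \<le> card (R y)"
    using ex_has_least_nat[of "\<lambda>m. (k, m) \<in> (gedges \<Omega>)\<^sup>*" k "\<lambda>m. card (R m)"] by auto
  have "(y, m) \<in> (gedges \<Omega>)\<^sup>*" if my: "(m, y) \<in> (gedges \<Omega>)\<^sup>*" for y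
  proof -
    have "R y \<subseteq> R m"
      using my unfolding R_def by (auto intro: rtrancl_trans)
    moreover have "card (R m) \<le> card (R y)"
      using min km my by (meson rtrancl_trans)
    ultimately have "R y = R m"
      using card_mono[of "R m" "R y"] by (intro card_subset_eq) auto
    then show ?thesis
      unfolding R_def by auto
  qed
  then have "m \<in> basin_union \<Omega>"
    using scc_in_basins scc_self unfolding basin_union_def by blast
  then show ?thesis
    using km by blast
qed

end

section \<open>Spanning forests rooted at the basins\<close>

definition reaches :: "('n \<times> 'n) set \<Rightarrow> 'n \<Rightarrow> 'n set \<Rightarrow> bool" where
  "reaches F v C \<longleftrightarrow> (\<exists>r\<in>C. (v, r) \<in> F\<^sup>*)"

definition basin_dist :: "real^'n^'n \<Rightarrow> 'n \<Rightarrow> nat" where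
  "basin_dist \<Omega> v = (LEAST d. \<exists>b\<in>basin_union \<Omega>. (v, b) \<in> gedges \<Omega> ^^ d)"

context
  fixes \<Omega> :: "real^'n^'n"
begin

lemma forests_B_to_eq: "forests_B_to \<Omega> C v = {F \<in> forests_B \<Omega>. reaches F v C}"
  by (simp add: forests_B_to_def reaches_def)

lemma forests_BD:
  assumes "F \<in> forests_B \<Omega>"
  shows "F \<subseteq> gedges \<Omega>" "\<And>r j. r \<in> basin_union \<Omega> \<Longrightarrow> (r, j) \<notin> F"
    "\<And>v. v \<notin> basin_union \<Omega> \<Longrightarrow> \<exists>!j. (v, j) \<in> F" "acyclic F"
  using assms unfolding forests_B_def spanning_forest_def by auto

lemma basin_dist_path: "\<exists>b\<in>basin_union \<Omega>. (v, b) \<in> gedges \<Omega> ^^ basin_dist \<Omega> v"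
proof -
  obtain b d where "b \<in> basin_union \<Omega>" "(v, b) \<in> gedges \<Omega> ^^ d"
    using ex_basin_union_reachable rtrancl_power by metis
  then have "\<exists>d. \<exists>b\<in>basin_union \<Omega>. (v, b) \<in> gedges \<Omega> ^^ d"
    by blast
  then show ?thesis
    unfolding basin_dist_def by (rule LeastI_ex)
qed

lemma basin_dist_descent:
  assumes "v \<notin> basin_union \<Omega>"
  shows "\<exists>y. (v, y) \<in> gedges \<Omega> \<and> basin_dist \<Omega> y < basin_dist \<Omega> v"
proof -
  obtain b where b: "b \<in> basin_union \<Omega>" "(v, b) \<in> gedges \<Omega> ^^ basin_dist \<Omega> v"
    using basin_dist_path by blast
  then obtain d where d: "basin_dist \<Omega> v = Suc d"
    using assms by (cases "basin_dist \<Omega> v") auto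
  then obtain y where y: "(v, y) \<in> gedges \<Omega>" "(y, b) \<in> gedges \<Omega> ^^ d"
    using b(2) relpow_Suc_D2 by metis
  have "basin_dist \<Omega> y \<le> d"
    unfolding basin_dist_def using y(2) b(1) by (intro Least_le) blast
  then show ?thesis
    using y(1) d by auto
qed

text \<open>Every vertex outside the basins points to a neighbour strictly closer to them.\<close>
lemma forests_B_nonempty: "forests_B \<Omega> \<noteq> {}"
proof -
  define nxt where "nxt v = (SOME y. (v, y) \<in> gedges \<Omega> \<and> basin_dist \<Omega> y < basin_dist \<Omega> v)" for v
  have nxt: "(v, nxt v) \<in> gedges \<Omega> \<and> basin_dist \<Omega> (nxt v) < basin_dist \<Omega> v"
    if "v \<notin> basin_union \<Omega>" for v
    unfolding nxt_def using basin_dist_descent[OF that] by (rule someI_ex)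
  define F where "F = {(v, nxt v) | v. v \<notin> basin_union \<Omega>}"
  have "F\<inverse> \<subseteq> inv_image less_than (basin_dist \<Omega>)"
    using nxt unfolding F_def by auto
  then have "acyclic F"
    using wf_acyclic[OF wf_subset[OF wf_inv_image[OF wf_less_than]]] by auto
  moreover have "F \<subseteq> gedges \<Omega>"
    using nxt unfolding F_def by auto
  moreover have "\<forall>r\<in>basin_union \<Omega>. \<forall>j. (r, j) \<notin> F"
    "\<forall>v. v \<notin> basin_union \<Omega> \<longrightarrow> (\<exists>!j. (v, j) \<in> F)"
    unfolding F_def by auto
  ultimately have "F \<in> forests_B \<Omega>"
    unfolding forests_B_def spanning_forest_def by blast
  then show ?thesis
    by blast
qed

lemma forests_B_root_rtrancl:
  "F \<in> forests_B \<Omega> \<Longrightarrow> r \<in> basin_union \<Omega> \<Longrightarrow> (r, y) \<in> F\<^sup>* \<Longrightarrow> y = r"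
  by (erule converse_rtranclE) (auto dest: forests_BD(2))

lemma reaches_basin_union_iff:
  "F \<in> forests_B \<Omega> \<Longrightarrow> v \<in> basin_union \<Omega> \<Longrightarrow> reaches F v C \<longleftrightarrow> v \<in> C"
  unfolding reaches_def using forests_B_root_rtrancl by blast

lemma reaches_rtrancl_iff:
  assumes F: "F \<in> forests_B \<Omega>" and C: "C \<subseteq> basin_union \<Omega>" and jk: "(j, k) \<in> F\<^sup>*"
  shows "reaches F j C \<longleftrightarrow> reaches F k C"
proof
  assume "reaches F j C"
  then obtain r where r: "r \<in> C" "(j, r) \<in> F\<^sup>*"
    unfolding reaches_def by blast
  have "single_valued F"
    unfolding single_valued_def using forests_BD(2,3)[OF F] by metis
  moreover have "r \<in> basin_union \<Omega>"
    using C r(1) by blast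
  ultimately have "(k, r) \<in> F\<^sup>*"
    using single_valued_confluent[OF _ jk r(2)] forests_B_root_rtrancl[OF F] by blast
  then show "reaches F k C"
    using r(1) unfolding reaches_def by blast
qed (use jk in \<open>auto simp: reaches_def intro: rtrancl_trans\<close>)

end

lemma forests_B_to_basin_union:
  "v \<in> basin_union \<Omega> \<Longrightarrow> forests_B_to \<Omega> C v = (if v \<in> C then forests_B \<Omega> else {})"
  using reaches_basin_union_iff unfolding forests_B_to_eq by auto

lemma kappa_nth:
  assumes C: "C \<subseteq> basin_union \<Omega>"
  shows "kappa \<Omega> C $ v = (\<Sum>F\<in>forests_B_to \<Omega> C v. fweight \<Omega> F)"
proof -
  have "(\<Sum>l\<in>UNIV - basin_union \<Omega>. c l *\<^sub>R axis l (1::real)) $ v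
      = (\<Sum>l\<in>UNIV - basin_union \<Omega>. if l = v then c l else 0)" for c
    unfolding sum_component by (intro sum.cong) (auto simp: axis_def)
  then have nth: "kappa \<Omega> C $ v = (if v \<in> C then (\<Sum>F\<in>forests_B \<Omega>. fweight \<Omega> F) else 0)
      + (if v \<notin> basin_union \<Omega> then (\<Sum>F\<in>forests_B_to \<Omega> C v. fweight \<Omega> F) else 0)"
    unfolding kappa_def by (simp add: axis_def)
  show ?thesis
  proof (cases "v \<in> basin_union \<Omega>")
    case True
    then show ?thesis
      using nth forests_B_to_basin_union[OF True] by simp
  next
    case False
    then show ?thesis
      using nth C by auto
  qed
qed

lemma kappa_nth_basin_union:
  assumes "C \<subseteq> basin_union \<Omega>" "v \<in> basin_union \<Omega>"
  shows "kappa \<Omega> C $ v = (if v \<in> C then (\<Sum>F\<in>forests_B \<Omega>. fweight \<Omega> F) else 0)"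
  using kappa_nth[OF assms(1)] forests_B_to_basin_union[OF assms(2)] by simp

lemma kappa_combination_nth:
  assumes C\<^sub>0: "C\<^sub>0 \<in> basins \<Omega>" and v: "v \<in> C\<^sub>0"
  shows "(\<Sum>C\<in>basins \<Omega>. c C *\<^sub>R kappa \<Omega> C) $ v = c C\<^sub>0 * (\<Sum>F\<in>forests_B \<Omega>. fweight \<Omega> F)"
proof -
  have vB: "v \<in> basin_union \<Omega>"
    using basin_subset_basin_union[OF C\<^sub>0] v by blast
  have "(c C *\<^sub>R kappa \<Omega> C) $ v = (if C = C\<^sub>0 then c C * (\<Sum>F\<in>forests_B \<Omega>. fweight \<Omega> F) else 0)"
    if C: "C \<in> basins \<Omega>" for C
  proof -
    have "v \<in> C \<longleftrightarrow> C = C\<^sub>0"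
      using basins_disjoint[OF C C\<^sub>0 _ v] v by blast
    then show ?thesis
      using kappa_nth_basin_union[OF basin_subset_basin_union[OF C] vB] by simp
  qed
  then show ?thesis
    unfolding sum_component using C\<^sub>0 by (simp add: sum.delta' cong: sum.cong)
qed

section \<open>Redirecting an edge of a forest\<close>

definition forest_succ :: "('n \<times> 'n) set \<Rightarrow> 'n \<Rightarrow> 'n" where
  "forest_succ F k = (THE j. (k, j) \<in> F)"

definition redirect :: "('n \<times> 'n) set \<Rightarrow> 'n \<Rightarrow> 'n \<Rightarrow> ('n \<times> 'n) set" where
  "redirect F k j = insert (k, j) (F - {(k, forest_succ F k)})"

lemma forest_succ_iff:
  assumes "F \<in> forests_B \<Omega>" "k \<notin> basin_union \<Omega>"
  shows "(k, j) \<in> F \<longleftrightarrow> j = forest_succ F k"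
proof -
  have ex1: "\<exists>!j. (k, j) \<in> F"
    by (rule forests_BD(3)[OF assms])
  show ?thesis
    unfolding forest_succ_def using the1_equality[OF ex1] theI'[OF ex1] by metis
qed

locale forest_redirection =
  fixes \<Omega> :: "real^'n^'n" and F :: "('n \<times> 'n) set" and k j :: 'n
  assumes forest: "F \<in> forests_B \<Omega>"
    and not_root: "k \<notin> basin_union \<Omega>"
    and edge: "(k, j) \<in> gedges \<Omega>"
    and no_cycle: "(j, k) \<notin> F\<^sup>*"
begin

abbreviation "s \<equiv> forest_succ F k"
abbreviation "F\<^sub>0 \<equiv> F - {(k, s)}"

lemma succ_iff: "(k, x) \<in> F \<longleftrightarrow> x = s"
  by (rule forest_succ_iff[OF forest not_root])

lemma succ_edge: "(k, s) \<in> gedges \<Omega>"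
  using succ_iff forests_BD(1)[OF forest] by blast

lemma succ_not_reaches: "(s, k) \<notin> F\<^sup>*"
proof
  assume "(s, k) \<in> F\<^sup>*"
  then have "(k, k) \<in> F\<^sup>+"
    using rtrancl_into_trancl2[of k s F k] succ_iff by blast
  then show False
    using forests_BD(4)[OF forest] unfolding acyclic_def by blast
qed

lemma redirect_eq: "redirect F k j = insert (k, j) F\<^sub>0"
  by (simp add: redirect_def)

lemma rtrancl_F0_subset: "F\<^sub>0\<^sup>* \<subseteq> F\<^sup>*"
  by (rule rtrancl_mono) blast

lemma rtrancl_F0_if_avoids_k:
  assumes "(v, y) \<in> F\<^sup>*" "(v, k) \<notin> F\<^sup>*"
  shows "(v, y) \<in> F\<^sub>0\<^sup>*"
  using assms(1)
proof induction
  case (step y z)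
  then have "y \<noteq> k"
    using assms(2) by blast
  then have "(y, z) \<in> F\<^sub>0"
    using step.hyps(2) by blast
  then show ?case
    by (rule rtrancl_into_rtrancl[OF step.IH])
qed simp

lemma rtrancl_redirect:
  "(redirect F k j)\<^sup>* = F\<^sub>0\<^sup>* \<union> {(x, y). (x, k) \<in> F\<^sub>0\<^sup>* \<and> (j, y) \<in> F\<^sub>0\<^sup>*}"
  by (simp add: redirect_eq rtrancl_insert)

lemma acyclic_redirect: "acyclic (redirect F k j)"
  unfolding acyclic_def
proof
  fix x
  show "(x, x) \<notin> (redirect F k j)\<^sup>+"
  proof
    assume "(x, x) \<in> (redirect F k j)\<^sup>+"
    then consider "(x, x) \<in> F\<^sub>0\<^sup>+" | "(x, k) \<in> F\<^sub>0\<^sup>*" "(j, x) \<in> F\<^sub>0\<^sup>*"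
      unfolding redirect_eq trancl_insert by blast
    then show False
    proof cases
      case 1
      then have "(x, x) \<in> F\<^sup>+"
        using trancl_mono by blast
      then show False
        using forests_BD(4)[OF forest] unfolding acyclic_def by blast
    next
      case 2
      then have "(j, k) \<in> F\<^sup>*"
        using rtrancl_F0_subset by (meson rtrancl_trans subsetD)
      then show False
        using no_cycle by simp
    qed
  qed
qed

lemma redirect_out_edge_iff: "(k, x) \<in> redirect F k j \<longleftrightarrow> x = j"
  using succ_iff unfolding redirect_eq by blast

lemma redirect_in_forests_B: "redirect F k j \<in> forests_B \<Omega>"
  unfolding forests_B_def spanning_forest_def
proof (intro CollectI conjI)
  show "redirect F k j \<subseteq> gedges \<Omega>"
    using edge forests_BD(1)[OF forest] unfolding redirect_eq by blast
  show "\<forall>r\<in>basin_union \<Omega>. \<forall>x. (r, x) \<notin> redirect F k j"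
    using forests_BD(2)[OF forest] not_root unfolding redirect_eq by blast
  show "\<forall>v. v \<notin> basin_union \<Omega> \<longrightarrow> (\<exists>!x. (v, x) \<in> redirect F k j)"
  proof (intro allI impI)
    fix v assume v: "v \<notin> basin_union \<Omega>"
    show "\<exists>!x. (v, x) \<in> redirect F k j"
    proof (cases "v = k")
      case True
      then show ?thesis
        using redirect_out_edge_iff by simp
    next
      case False
      then have "(v, x) \<in> redirect F k j \<longleftrightarrow> (v, x) \<in> F" for x
        unfolding redirect_eq by blast
      then show ?thesis
        using forests_BD(3)[OF forest v] by simp
    qed
  qed
  show "acyclic (redirect F k j)"
    by (rule acyclic_redirect)
qed

lemma forest_succ_redirect: "forest_succ (redirect F k j) k = j"
  unfolding forest_succ_def redirect_out_edge_iff by simp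

lemma redirect_redirect: "redirect (redirect F k j) k s = F"
proof -
  have "redirect (redirect F k j) k s = insert (k, s) (redirect F k j - {(k, j)})"
    unfolding redirect_def[of "redirect F k j"] forest_succ_redirect ..
  also have "\<dots> = F"
    using succ_iff redirect_out_edge_iff unfolding redirect_eq by blast
  finally show ?thesis .
qed

lemma succ_not_reaches_redirect: "(s, k) \<notin> (redirect F k j)\<^sup>*"
  using rtrancl_redirect rtrancl_F0_subset succ_not_reaches by blast

lemma fweight_redirect: "\<Omega> $ s $ k * fweight \<Omega> (redirect F k j) = \<Omega> $ j $ k * fweight \<Omega> F"
proof (cases "j = s")
  case True
  then have "redirect F k j = F"
    using succ_iff unfolding redirect_eq by auto
  then show ?thesis
    using True by simp
next
  case False
  have "fweight \<Omega> (redirect F k j) = \<Omega> $ j $ k * (\<Prod>(a, b)\<in>F\<^sub>0. \<Omega> $ b $ a)"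
    using False succ_iff unfolding fweight_def redirect_eq by (simp add: prod.insert)
  moreover have "fweight \<Omega> F = \<Omega> $ s $ k * (\<Prod>(a, b)\<in>F\<^sub>0. \<Omega> $ b $ a)"
    using prod.remove[of F "(k, s)" "\<lambda>(a, b). \<Omega> $ b $ a"] succ_iff
    unfolding fweight_def by simp
  ultimately show ?thesis
    by simp
qed

text \<open>The path from s in the redirected forest is the path from s in F, which avoids k.\<close>
lemma reaches_redirect:
  assumes "C \<subseteq> basin_union \<Omega>"
  shows "reaches (redirect F k j) s C \<longleftrightarrow> reaches F k C"
proof -
  have "(s, k) \<notin> F\<^sub>0\<^sup>*"
    using rtrancl_F0_subset succ_not_reaches by blast
  then have "(s, y) \<in> (redirect F k j)\<^sup>* \<longleftrightarrow> (s, y) \<in> F\<^sub>0\<^sup>*" for y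
    by (simp add: rtrancl_redirect)
  also have "\<dots> y \<longleftrightarrow> (s, y) \<in> F\<^sup>*" for y
    using rtrancl_F0_subset rtrancl_F0_if_avoids_k succ_not_reaches by blast
  finally have "(s, y) \<in> (redirect F k j)\<^sup>* \<longleftrightarrow> (s, y) \<in> F\<^sup>*" for y .
  then have "reaches (redirect F k j) s C \<longleftrightarrow> reaches F s C"
    unfolding reaches_def by simp
  also have "\<dots> \<longleftrightarrow> reaches F k C"
    using reaches_rtrancl_iff[OF forest assms r_into_rtrancl[of "(k, s)" F]] succ_iff by simp
  finally show ?thesis .
qed

lemma forest_redirection_redirect: "forest_redirection \<Omega> (redirect F k j) k s"
  using redirect_in_forests_B not_root succ_edge succ_not_reaches_redirect
  by unfold_locales

end

lemma sum_forests_B_to_as_pairs: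
  fixes \<Omega> :: "real^'n^'n"
  shows "(\<Sum>j\<in>J. c j * (\<Sum>F\<in>forests_B_to \<Omega> C (x j). fweight \<Omega> F))
       = (\<Sum>(F, j)\<in>forests_B \<Omega> \<times> J. if reaches F (x j) C then c j * fweight \<Omega> F else 0)"
proof -
  have "(\<Sum>j\<in>J. c j * (\<Sum>F\<in>forests_B_to \<Omega> C (x j). fweight \<Omega> F))
      = (\<Sum>j\<in>J. \<Sum>F\<in>forests_B \<Omega>. if reaches F (x j) C then c j * fweight \<Omega> F else 0)"
    unfolding forests_B_to_eq by (auto simp: sum.inter_filter sum_distrib_left intro!: sum.cong)
  also have "\<dots> = (\<Sum>F\<in>forests_B \<Omega>. \<Sum>j\<in>J. if reaches F (x j) C then c j * fweight \<Omega> F else 0)"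
    by (rule sum.swap)
  finally show ?thesis
    by (simp add: sum.cartesian_product)
qed

text \<open>The heart of the Markov chain tree theorem: redirecting the out-edge of k is an
  involution on the pairs (forest, out-neighbour of k) in which the neighbour does not lie
  upstream of k, and it exchanges the two sides of the identity term by term.\<close>
lemma forest_balance:
  fixes \<Omega> :: "real^'n^'n"
  assumes k: "k \<notin> basin_union \<Omega>" and C: "C \<subseteq> basin_union \<Omega>"
  shows "(\<Sum>j | (k, j) \<in> gedges \<Omega>. \<Omega> $ j $ k * (\<Sum>F\<in>forests_B_to \<Omega> C j. fweight \<Omega> F))
       = (\<Sum>j | (k, j) \<in> gedges \<Omega>. \<Omega> $ j $ k * (\<Sum>F\<in>forests_B_to \<Omega> C k. fweight \<Omega> F))"
proof -
  define P where "P = forests_B \<Omega> \<times> {j. (k, j) \<in> gedges \<Omega>}"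
  define Q where "Q = {(F, j) \<in> P. (j, k) \<in> F\<^sup>*}"
  define f where "f = (\<lambda>(F, j). if reaches F j C then \<Omega> $ j $ k * fweight \<Omega> F else 0)"
  define g where "g = (\<lambda>(F, j). if reaches F k C then \<Omega> $ j $ k * fweight \<Omega> F else 0)"
  define \<phi> where "\<phi> = (\<lambda>(F, j). (redirect F k j, forest_succ F k))"
  have "f p = g p" if "p \<in> Q" for p
    using that reaches_rtrancl_iff[OF _ C] unfolding f_def g_def Q_def P_def by auto
  then have on_Q: "sum f Q = sum g Q"
    by (rule sum.cong[OF refl])
  have involution: "\<phi> p \<in> P - Q \<and> \<phi> (\<phi> p) = p \<and> f (\<phi> p) = g p" if p: "p \<in> P - Q" for p
  proof -
    obtain F j where p_eq: "p = (F, j)"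
      by fastforce
    interpret forest_redirection \<Omega> F k j
      using p k unfolding p_eq P_def Q_def by unfold_locales auto
    interpret flipped: forest_redirection \<Omega> "redirect F k j" k "forest_succ F k"
      by (rule forest_redirection_redirect)
    show ?thesis
      using flipped.forest redirect_redirect forest_succ_redirect flipped.edge flipped.no_cycle
        fweight_redirect reaches_redirect[OF C]
      unfolding p_eq \<phi>_def P_def Q_def f_def g_def
      by (auto simp: mult.commute)
  qed
  then have "bij_betw \<phi> (P - Q) (P - Q)"
    by (intro bij_betwI[where g = \<phi>]) auto
  then have "sum f (P - Q) = (\<Sum>p\<in>P - Q. f (\<phi> p))"
    by (rule sum.reindex_bij_betw[symmetric])
  also have "\<dots> = sum g (P - Q)"
    using involution by (intro sum.cong) auto
  finally have "sum f (P - Q) = sum g (P - Q)" .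
  moreover have "Q \<subseteq> P"
    unfolding Q_def by auto
  ultimately have "sum f P = sum g P"
    using on_Q sum.subset_diff[of Q P f] sum.subset_diff[of Q P g] by simp
  then show ?thesis
    using sum_forests_B_to_as_pairs[where c = "\<lambda>j. \<Omega> $ j $ k" and x = "\<lambda>j. j"]
      sum_forests_B_to_as_pairs[where c = "\<lambda>j. \<Omega> $ j $ k" and x = "\<lambda>_. k"]
    unfolding f_def g_def P_def by simp
qed

section \<open>Rate matrices\<close>

locale zero_column_sums =
  fixes \<Omega> :: "real^'n^'n"
  assumes column_sum_zero: "\<And>k. (\<Sum>j\<in>UNIV. \<Omega> $ j $ k) = 0"
begin

lemma transpose_mult_vec_nth:
  "(transpose \<Omega> *v x) $ k = (\<Sum>j | (k, j) \<in> gedges \<Omega>. \<Omega> $ j $ k * (x $ j - x $ k))"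
proof -
  have "(transpose \<Omega> *v x) $ k = (\<Sum>j\<in>UNIV. \<Omega> $ j $ k * x $ j) - (\<Sum>j\<in>UNIV. \<Omega> $ j $ k) * x $ k"
    by (simp add: matrix_vector_mult_def transpose_def column_sum_zero)
  also have "\<dots> = (\<Sum>j\<in>UNIV. \<Omega> $ j $ k * (x $ j - x $ k))"
    by (simp add: sum_distrib_right sum_subtractf right_diff_distrib)
  also have "\<dots> = (\<Sum>j | (k, j) \<in> gedges \<Omega>. \<Omega> $ j $ k * (x $ j - x $ k))"
    by (rule sum.mono_neutral_right) (auto simp: gedges_iff)
  finally show ?thesis .
qed

lemma kappa_left_kernel:
  assumes C: "C \<in> basins \<Omega>"
  shows "transpose \<Omega> *v kappa \<Omega> C = 0"
proof -
  have CB: "C \<subseteq> basin_union \<Omega>"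
    by (rule basin_subset_basin_union[OF C])
  have "(transpose \<Omega> *v kappa \<Omega> C) $ k = 0" for k
  proof (cases "k \<in> basin_union \<Omega>")
    case True
    have "kappa \<Omega> C $ j = kappa \<Omega> C $ k" if "(k, j) \<in> gedges \<Omega>" for j
      using kappa_nth_basin_union[OF CB] basin_union_edge_closed[OF True that]
        basin_union_edge_iff[OF C True that] True by simp
    then show ?thesis
      unfolding transpose_mult_vec_nth by simp
  next
    case False
    then show ?thesis
      using forest_balance[OF False CB] unfolding transpose_mult_vec_nth kappa_nth[OF CB]
      by (simp add: right_diff_distrib sum_subtractf)
  qed
  then show ?thesis
    by (simp add: vec_eq_iff)
qed

end

lemma left_null_vector_inner_constant:
  fixes A :: "real^'n^'n" and \<Lambda> :: "real \<Rightarrow> real^'n"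
  assumes y: "transpose A *v y = 0" and I: "is_interval I"
    and deriv: "\<And>t. t \<in> I \<Longrightarrow> (\<Lambda> has_vector_derivative (A *v \<Lambda> t)) (at t within I)"
    and "s \<in> I" "t \<in> I"
  shows "y \<bullet> \<Lambda> s = y \<bullet> \<Lambda> t"
proof -
  have "((\<lambda>t. y \<bullet> \<Lambda> t) has_field_derivative 0) (at t within I)" if "t \<in> I" for t
  proof -
    have "((\<lambda>t. y \<bullet> \<Lambda> t) has_vector_derivative (y \<bullet> (A *v \<Lambda> t))) (at t within I)"
      using deriv[OF that] by (rule bounded_linear.has_vector_derivative[OF bounded_linear_inner_right])
    moreover have "y \<bullet> (A *v \<Lambda> t) = 0"
      using dot_lmul_matrix[of y A "\<Lambda> t"] y by simp
    ultimately show ?thesis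
      by (simp add: has_real_derivative_iff_has_vector_derivative)
  qed
  then obtain c where "\<forall>t\<in>I. y \<bullet> \<Lambda> t = c"
    using has_field_derivative_zero_constant is_interval_convex[OF I] by metis
  then show ?thesis
    using \<open>s \<in> I\<close> \<open>t \<in> I\<close> by simp
qed

locale rate_matrix = zero_column_sums +
  assumes offdiag_nonneg: "\<And>j k. j \<noteq> k \<Longrightarrow> 0 \<le> \<Omega> $ j $ k"
begin

lemma gedges_pos: "(k, j) \<in> gedges \<Omega> \<Longrightarrow> 0 < \<Omega> $ j $ k"
  using offdiag_nonneg[of j k] by (simp add: gedges_iff)

lemma fweight_pos:
  assumes "F \<in> forests_B \<Omega>"
  shows "0 < fweight \<Omega> F"
proof -
  have "0 < \<Omega> $ j $ k" if "(k, j) \<in> F" for k j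
    using forests_BD(1)[OF assms] that gedges_pos by blast
  then show ?thesis
    unfolding fweight_def by (intro prod_pos) auto
qed

lemma forests_B_weight_pos: "0 < (\<Sum>F\<in>forests_B \<Omega>. fweight \<Omega> F)"
  using forests_B_nonempty fweight_pos by (intro sum_pos) auto

lemma left_kernel_local_max:
  assumes x: "transpose \<Omega> *v x = 0"
    and max: "\<And>i. (k, i) \<in> gedges \<Omega> \<Longrightarrow> x $ i \<le> x $ k"
    and kj: "(k, j) \<in> gedges \<Omega>"
  shows "x $ j = x $ k"
proof -
  have "(\<Sum>i | (k, i) \<in> gedges \<Omega>. \<Omega> $ i $ k * (x $ k - x $ i))
      = (\<Sum>i | (k, i) \<in> gedges \<Omega>. - (\<Omega> $ i $ k * (x $ i - x $ k)))"
    by (rule sum.cong) (simp_all add: algebra_simps)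
  also have "\<dots> = - (transpose \<Omega> *v x) $ k"
    unfolding transpose_mult_vec_nth sum_negf ..
  also have "\<dots> = 0"
    using x by simp
  finally have sum0: "(\<Sum>i | (k, i) \<in> gedges \<Omega>. \<Omega> $ i $ k * (x $ k - x $ i)) = 0" .
  have "0 \<le> \<Omega> $ i $ k * (x $ k - x $ i)" if "(k, i) \<in> gedges \<Omega>" for i
    using gedges_pos[OF that] max[OF that] by simp
  then have "(\<Sum>i | (k, i) \<in> gedges \<Omega>. \<Omega> $ i $ k * (x $ k - x $ i)) = 0
      \<longleftrightarrow> (\<forall>i\<in>{i. (k, i) \<in> gedges \<Omega>}. \<Omega> $ i $ k * (x $ k - x $ i) = 0)"
    by (intro sum_nonneg_eq_0_iff) auto
  then have "\<Omega> $ j $ k * (x $ k - x $ j) = 0"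
    using sum0 kj by blast
  then show ?thesis
    using gedges_pos[OF kj] by simp
qed

lemma left_kernel_reachable_eq:
  assumes x: "transpose \<Omega> *v x = 0"
    and max: "\<And>v. (k, v) \<in> (gedges \<Omega>)\<^sup>* \<Longrightarrow> x $ v \<le> x $ k"
    and "(k, v) \<in> (gedges \<Omega>)\<^sup>*"
  shows "x $ v = x $ k"
  using assms(3)
proof induction
  case (step y z)
  have "x $ z = x $ y"
  proof (rule left_kernel_local_max[OF x _ step.hyps(2)])
    fix i assume "(y, i) \<in> gedges \<Omega>"
    then show "x $ i \<le> x $ y"
      using max rtrancl_into_rtrancl[OF step.hyps(1)] step.IH by metis
  qed
  then show ?case
    using step.IH by simp
qed simp

lemma left_kernel_const_on_basin:
  assumes x: "transpose \<Omega> *v x = 0" and C: "C \<in> basins \<Omega>" and "v \<in> C" "w \<in> C"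
  shows "x $ v = x $ w"
proof -
  have "Max ((\<lambda>u. x $ u) ` C) \<in> (\<lambda>u. x $ u) ` C"
    using \<open>v \<in> C\<close> by (intro Max_in) auto
  then obtain k where k: "k \<in> C" "x $ k = Max ((\<lambda>u. x $ u) ` C)"
    by (metis imageE)
  have "x $ u = x $ k" if "u \<in> C" for u
  proof (rule left_kernel_reachable_eq[OF x])
    show "(k, u) \<in> (gedges \<Omega>)\<^sup>*"
      using basin_eq_scc[OF C k(1)] that unfolding scc_def by blast
    show "x $ u' \<le> x $ k" if "(k, u') \<in> (gedges \<Omega>)\<^sup>*" for u'
      using k(2) basin_rtrancl_closed[OF C k(1) that] by simp
  qed
  then show ?thesis
    using assms(3,4) by simp
qed

lemma left_kernel_max_in_basin_union:
  assumes x: "transpose \<Omega> *v x = 0"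
  obtains b where "b \<in> basin_union \<Omega>" "\<And>v. x $ v \<le> x $ b"
proof -
  have "Max (range (\<lambda>u. x $ u)) \<in> range (\<lambda>u. x $ u)"
    by (intro Max_in) auto
  then obtain k where "x $ k = Max (range (\<lambda>u. x $ u))"
    by (metis imageE)
  then have max: "x $ v \<le> x $ k" for v
    by simp
  obtain b where b: "b \<in> basin_union \<Omega>" "(k, b) \<in> (gedges \<Omega>)\<^sup>*"
    using ex_basin_union_reachable by blast
  have "x $ b = x $ k"
    using left_kernel_reachable_eq[OF x _ b(2)] max by blast
  then show ?thesis
    using that[OF b(1)] max by simp
qed

lemma left_kernel_eq_0:
  assumes x: "transpose \<Omega> *v x = 0" and zero: "\<And>v. v \<in> basin_union \<Omega> \<Longrightarrow> x $ v = 0"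
  shows "x = 0"
proof -
  have nonpos: "y $ v \<le> 0"
    if y: "transpose \<Omega> *v y = 0" and y0: "\<And>v. v \<in> basin_union \<Omega> \<Longrightarrow> y $ v = 0" for y v
  proof -
    obtain b where "b \<in> basin_union \<Omega>" "\<And>v. y $ v \<le> y $ b"
      using left_kernel_max_in_basin_union[OF y] by blast
    then show ?thesis
      using y0[of b] by simp
  qed
  have "transpose \<Omega> *v (0 - x) = 0"
    unfolding matrix_vector_mult_diff_distrib x by simp
  then have "(0 - x) $ v \<le> 0" for v
    by (rule nonpos) (simp add: zero)
  then have "0 \<le> x $ v" for v
    by simp
  moreover have "x $ v \<le> 0" for v
    by (rule nonpos[OF x zero])
  ultimately have "x $ v = 0" for v
    by (meson order_antisym)
  then show ?thesis
    by (simp add: vec_eq_iff)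
qed

lemma span_kappa_subset_left_kernel: "span (kappa \<Omega> ` basins \<Omega>) \<subseteq> {x. transpose \<Omega> *v x = 0}"
proof (rule span_minimal)
  show "subspace {x. transpose \<Omega> *v x = 0}"
    unfolding subspace_def
    by (simp del: transpose_matrix_vector add: matrix_vector_right_distrib matrix_vector_mult_scaleR)
qed (use kappa_left_kernel in auto)

text \<open>A left null vector is determined by its values on the basins, where it is constant on
  each basin, while kappa of a basin is a positive multiple of its indicator there.\<close>
lemma left_kernel_subset_span_kappa: "{x. transpose \<Omega> *v x = 0} \<subseteq> span (kappa \<Omega> ` basins \<Omega>)"
proof
  fix x assume "x \<in> {x. transpose \<Omega> *v x = 0}"
  then have x: "transpose \<Omega> *v x = 0"
    by simp
  define Z where "Z = (\<Sum>F\<in>forests_B \<Omega>. fweight \<Omega> F)"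
  define z where "z = (\<Sum>C\<in>basins \<Omega>. (x $ (SOME v. v \<in> C) / Z) *\<^sub>R kappa \<Omega> C)"
  have z_span: "z \<in> span (kappa \<Omega> ` basins \<Omega>)"
    unfolding z_def by (intro span_sum span_scale span_base) auto
  have "x - z = 0"
  proof (rule left_kernel_eq_0)
    show "transpose \<Omega> *v (x - z) = 0"
      using x z_span span_kappa_subset_left_kernel by (auto simp: matrix_vector_mult_diff_distrib)
  next
    fix v assume "v \<in> basin_union \<Omega>"
    then obtain C where C: "C \<in> basins \<Omega>" "v \<in> C"
      unfolding basin_union_def by blast
    have "(SOME v. v \<in> C) \<in> C"
      using basin_nonempty[OF C(1)] some_in_eq by blast
    then have "x $ (SOME v. v \<in> C) = x $ v"
      using left_kernel_const_on_basin[OF x C(1)] C(2) by blast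
    moreover have "z $ v = x $ (SOME v. v \<in> C) / Z * Z"
      unfolding z_def Z_def by (rule kappa_combination_nth[OF C])
    ultimately have "z $ v = x $ v"
      using forests_B_weight_pos unfolding Z_def by simp
    then show "(x - z) $ v = 0"
      by simp
  qed
  then show "x \<in> span (kappa \<Omega> ` basins \<Omega>)"
    using z_span by simp
qed

lemma span_kappa_eq_left_kernel: "span (kappa \<Omega> ` basins \<Omega>) = {x. transpose \<Omega> *v x = 0}"
  using span_kappa_subset_left_kernel left_kernel_subset_span_kappa by (rule antisym)

lemma inj_on_kappa: "inj_on (kappa \<Omega>) (basins \<Omega>)"
proof
  fix C C' assume C: "C \<in> basins \<Omega>" and C': "C' \<in> basins \<Omega>" and eq: "kappa \<Omega> C = kappa \<Omega> C'"
  obtain v where v: "v \<in> C"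
    using basin_nonempty[OF C] by blast
  then have vB: "v \<in> basin_union \<Omega>"
    using basin_subset_basin_union[OF C] by blast
  have "kappa \<Omega> C' $ v \<noteq> 0"
    using eq kappa_nth_basin_union[OF basin_subset_basin_union[OF C] vB] v forests_B_weight_pos
    by simp
  then have "v \<in> C'"
    using kappa_nth_basin_union[OF basin_subset_basin_union[OF C'] vB] by (auto split: if_splits)
  then show "C = C'"
    using basins_disjoint[OF C C' v] by simp
qed

lemma independent_kappa: "independent (kappa \<Omega> ` basins \<Omega>)"
proof (rule independent_if_scalars_zero)
  fix c y assume sum0: "(\<Sum>y\<in>kappa \<Omega> ` basins \<Omega>. c y *\<^sub>R y) = 0" and "y \<in> kappa \<Omega> ` basins \<Omega>"
  then obtain C\<^sub>0 where C\<^sub>0: "C\<^sub>0 \<in> basins \<Omega>" "y = kappa \<Omega> C\<^sub>0"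
    by blast
  obtain v where v: "v \<in> C\<^sub>0"
    using basin_nonempty[OF C\<^sub>0(1)] by blast
  have "(\<Sum>C\<in>basins \<Omega>. c (kappa \<Omega> C) *\<^sub>R kappa \<Omega> C) = 0"
    using sum0 by (simp add: sum.reindex[OF inj_on_kappa])
  then have "c y * (\<Sum>F\<in>forests_B \<Omega>. fweight \<Omega> F) = 0"
    using kappa_combination_nth[OF C\<^sub>0(1) v, of "\<lambda>C. c (kappa \<Omega> C)"] C\<^sub>0(2) by simp
  then show "c y = 0"
    using forests_B_weight_pos by simp
qed simp

end

section \<open>Lindblad rates\<close>

lemma ctrans_mult: "ctrans (A ** B) = ctrans B ** ctrans A"
  for A :: "complex^'n^'m" and B :: "complex^'k^'n"
  by (simp add: vec_eq_iff ctrans_def matrix_matrix_mult_def mult.commute)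

lemma Re_trace_mult_ctrans_nonneg: "0 \<le> Re (trace (M ** ctrans M))"
  for M :: "complex^'n^'n"
proof -
  have "Re (trace (M ** ctrans M)) = (\<Sum>i\<in>UNIV. \<Sum>k\<in>UNIV. (Re (M $ i $ k))\<^sup>2 + (Im (M $ i $ k))\<^sup>2)"
    by (simp add: trace_def matrix_matrix_mult_def ctrans_def complex_mult_cnj)
  also have "\<dots> \<ge> 0"
    by (intro sum_nonneg) simp
  finally show ?thesis .
qed

text \<open>For orthogonal projectors P and Q the trace is the squared Frobenius norm of P L Q.\<close>
lemma Re_trace_proj_sandwich_nonneg:
  fixes P Q L :: "complex^'n^'n"
  assumes P: "P ** P = P" "ctrans P = P" and Q: "Q ** Q = Q" "ctrans Q = Q"
  shows "0 \<le> Re (trace (P ** L ** Q ** ctrans L))"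
proof -
  define M where "M = P ** L ** Q"
  have "M ** ctrans M = P ** L ** Q ** ctrans L ** P"
    unfolding M_def ctrans_mult P(2) Q(2) by (metis Q(1) matrix_mul_assoc)
  then have "trace (M ** ctrans M) = trace (P ** (P ** L ** Q ** ctrans L))"
    using trace_mul_sym[of "P ** L ** Q ** ctrans L" P] by simp
  also have "\<dots> = trace (P ** L ** Q ** ctrans L)"
    by (metis P(1) matrix_mul_assoc)
  finally show ?thesis
    using Re_trace_mult_ctrans_nonneg[of M] by simp
qed

lemma rate_nonneg:
  assumes "\<And>j. rank_one_orth_proj (\<pi> j)"
  shows "0 \<le> rate N L \<pi> j k"
proof -
  have "0 \<le> Re (trace (\<pi> j ** L \<alpha> ** \<pi> k ** ctrans (L \<alpha>)))" for \<alpha>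
    using assms[of j] assms[of k] unfolding rank_one_orth_proj_def
    by (intro Re_trace_proj_sandwich_nonneg) auto
  then show ?thesis
    unfolding rate_def by (simp add: sum_nonneg)
qed

lemma rate_matrix_Omega_mat:
  fixes \<pi> :: "'n \<Rightarrow> complex^'n^'n"
  assumes "\<And>j. rank_one_orth_proj (\<pi> j)"
  shows "rate_matrix (Omega_mat N L \<pi>)"
proof
  fix k
  have "(\<Sum>j\<in>UNIV. Omega_mat N L \<pi> $ j $ k)
      = Omega_mat N L \<pi> $ k $ k + (\<Sum>j\<in>UNIV - {k}. Omega_mat N L \<pi> $ j $ k)"
    by (simp add: sum.remove[of UNIV k])
  also have "\<dots> = 0"
    unfolding Omega_mat_def by simp
  finally show "(\<Sum>j\<in>UNIV. Omega_mat N L \<pi> $ j $ k) = 0" .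
next
  fix j k :: 'n assume "j \<noteq> k"
  then show "0 \<le> Omega_mat N L \<pi> $ j $ k"
    unfolding Omega_mat_def using rate_nonneg[OF assms] by simp
qed

theorem mainTheorem4:
  fixes N :: nat
    and L :: "nat \<Rightarrow> complex^'n^'n"
    and \<pi> :: "'n \<Rightarrow> complex^'n^'n"
    and \<Omega> :: "real^'n^'n"
  assumes proj: "\<And>j. rank_one_orth_proj (\<pi> j)"
    and orth: "\<And>j k. j \<noteq> k \<Longrightarrow> \<pi> j ** \<pi> k = 0"
    and Om: "\<Omega> = Omega_mat N L \<pi>"
  shows "span (kappa \<Omega> ` basins \<Omega>) = {x. transpose \<Omega> *v x = 0}
       \<and> inj_on (kappa \<Omega>) (basins \<Omega>)
       \<and> independent (kappa \<Omega> ` basins \<Omega>)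
       \<and> (\<forall>(\<Lambda> :: real \<Rightarrow> real^'n) I. is_interval I \<longrightarrow>
            (\<forall>t\<in>I. (\<Lambda> has_vector_derivative (\<Omega> *v \<Lambda> t)) (at t within I)) \<longrightarrow>
            (\<forall>C\<in>basins \<Omega>. \<forall>s\<in>I. \<forall>t\<in>I. kappa \<Omega> C \<bullet> \<Lambda> s = kappa \<Omega> C \<bullet> \<Lambda> t))"
proof -
  interpret rate_matrix \<Omega>
    unfolding Om by (rule rate_matrix_Omega_mat[OF proj])
  have conserved: "kappa \<Omega> C \<bullet> \<Lambda> s = kappa \<Omega> C \<bullet> \<Lambda> t"
    if "is_interval I" "\<forall>t\<in>I. (\<Lambda> has_vector_derivative (\<Omega> *v \<Lambda> t)) (at t within I)"
      "C \<in> basins \<Omega>" "s \<in> I" "t \<in> I" for \<Lambda> I C s t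
    using left_null_vector_inner_constant[OF kappa_left_kernel] that by blast
  show ?thesis
    using span_kappa_eq_left_kernel inj_on_kappa independent_kappa conserved by blast
qed

end
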